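(* Let $X_1,\ldots,X_n$ be non-empty sets, let $L=\{x_1,\ldots,x_k\}\subset X_1\times\cdots\times X_n$ be a loop, and let $n_1,\ldots,n_k$ be integers with $\gcd(n_1,\ldots,n_k)=1$ such that the formal sum $\sum_{j=1}^k n_jx_j$ vanishes. If $r_1,\ldots,r_k$ are real numbers such that the formal sum $\sum_{j=1}^k r_jx_j$ vanishes, then there is a real number $\alpha$ with $r_j=\alpha n_j$ for every $j$.
   Context: For points $x_1,\ldots,x_k\in X_1\times\cdots\times X_n$ (with $x_j=(x_{j1},\ldots,x_{jn})$) and numbers $c_1,\ldots,c_k$, the formal sum $\sum_j c_jx_j$ vanishes (coordinate-wise) if for every $i\in\{1,\ldots,n\}$ and every $a\in X_i$, $\sum_{j:\,x_{ji}=a}c_j=0$. A non-empty finite set $L=\{x_1,\ldots,x_k\}$ of distinct points is a loop if there exist non-zero integers $n_1,\ldots,n_k$ such that $\sum_j n_jx_j$ vanishes, and no strictly smaller non-empty subset of $L$ has this property. *)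

theory Defs
  imports "HOL-Analysis.Analysis"
begin

text \<open>Points of X_1 x ... x X_n are modelled as extensional functions in
  PiE {..<n} X (coordinates indexed 0..n-1). A formal sum over a finite set L
  of distinct points is given by a coefficient function c on L.\<close>

definition vanishes ::
  "nat \<Rightarrow> (nat \<Rightarrow> 'a set) \<Rightarrow> (nat \<Rightarrow> 'a) set \<Rightarrow> ((nat \<Rightarrow> 'a) \<Rightarrow> 'b::comm_monoid_add) \<Rightarrow> bool"
  where "vanishes n X L c \<longleftrightarrow>
    (\<forall>i<n. \<forall>a\<in>X i. (\<Sum>x\<in>{x\<in>L. x i = a}. c x) = 0)"

definition has_int_relation ::
  "nat \<Rightarrow> (nat \<Rightarrow> 'a set) \<Rightarrow> (nat \<Rightarrow> 'a) set \<Rightarrow> bool"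
  where "has_int_relation n X L \<longleftrightarrow>
    (\<exists>m :: (nat \<Rightarrow> 'a) \<Rightarrow> int. (\<forall>x\<in>L. m x \<noteq> 0) \<and> vanishes n X L m)"

definition is_loop ::
  "nat \<Rightarrow> (nat \<Rightarrow> 'a set) \<Rightarrow> (nat \<Rightarrow> 'a) set \<Rightarrow> bool"
  where "is_loop n X L \<longleftrightarrow>
    L \<noteq> {} \<and> finite L \<and> L \<subseteq> PiE {..<n} X \<and> has_int_relation n X L \<and>
    (\<forall>L'. L' \<subset> L \<and> L' \<noteq> {} \<longrightarrow> \<not> has_int_relation n X L')"

end

theory Submission
  imports Defs
begin

text \<open>Subtracting a suitable multiple of N from r gives a real relation on the loop that
  vanishes at some point. If it did not vanish identically, a \<open>\<rat>\<close>-linear functional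
  \<open>\<real> \<rightarrow> \<rat>\<close> followed by clearing denominators would turn it into an integer relation whose
  support is a non-empty proper subset of the loop, contradicting minimality.\<close>

lemma vanishes_additive:
  assumes "Modules.additive f" and "vanishes n X L c"
  shows "vanishes n X L (\<lambda>x. f (c x))"
  using assms by (simp add: vanishes_def Modules.additive.sum[symmetric] Modules.additive.zero)

lemma vanishes_diff:
  fixes c d :: "(nat \<Rightarrow> 'a) \<Rightarrow> 'b::ab_group_add"
  assumes "vanishes n X L c" and "vanishes n X L d"
  shows "vanishes n X L (\<lambda>x. c x - d x)"
  using assms by (simp add: vanishes_def sum_subtractf)

lemma vanishes_on_support:
  assumes "finite L" and "vanishes n X L c"
  shows "vanishes n X {x\<in>L. c x \<noteq> 0} c"
proof -
  have "(\<Sum>x\<in>{x\<in>{x\<in>L. c x \<noteq> 0}. x i = a}. c x) = (\<Sum>x\<in>{x\<in>L. x i = a}. c x)" for i a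
    by (rule sum.mono_neutral_left) (use assms(1) in auto)
  then show ?thesis
    using assms(2) by (simp add: vanishes_def)
qed

lemma exists_additive_real_to_rat:
  fixes v :: real
  assumes "v \<noteq> 0"
  obtains \<phi> :: "real \<Rightarrow> rat" where "Modules.additive \<phi>" and "\<phi> v = 1"
proof -
  \<comment> \<open>View \<open>\<real>\<close> as a \<open>\<rat>\<close>-vector space and extend \<open>{v}\<close> to a Hamel basis.\<close>
  interpret p: vector_space_pair "\<lambda>q::rat. \<lambda>x::real. of_rat q * x" "(*) :: rat \<Rightarrow> rat \<Rightarrow> rat"
    by unfold_locales (auto simp: algebra_simps of_rat_add of_rat_mult)
  have ind: "p.vs1.independent {v}"
    using assms by (intro p.vs1.independent_insertI) (auto simp: p.vs1.independent_empty)
  interpret l: Vector_Spaces.linear "\<lambda>q::rat. \<lambda>x::real. of_rat q * x" "(*) :: rat \<Rightarrow> rat \<Rightarrow> rat"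
      "p.construct {v} (\<lambda>_. 1)"
    by (rule p.linear_construct[OF ind])
  show ?thesis
    by (rule that[of "p.construct {v} (\<lambda>_. 1)"])
      (simp_all add: Modules.additive_def l.add p.construct_basis[OF ind])
qed

lemma rat_fun_common_denominator:
  fixes q :: "'b \<Rightarrow> rat"
  assumes "finite L"
  obtains m :: "'b \<Rightarrow> int" and d :: int where "d > 0" and "\<forall>x\<in>L. of_int (m x) = of_int d * q x"
proof -
  have "\<exists>m::'b \<Rightarrow> int. \<exists>d::int. d > 0 \<and> (\<forall>x\<in>L. of_int (m x) = of_int d * q x)"
    using assms
  proof (induction L rule: finite_induct)
    case empty
    show ?case by (intro exI[of _ "\<lambda>_. 0"] exI[of _ 1]) simp
  next
    case (insert x F)
    then obtain m d where md: "d > 0" "\<forall>y\<in>F. of_int (m y) = of_int d * q y" by blast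
    obtain a b where ab: "quotient_of (q x) = (a, b)" by (cases "quotient_of (q x)")
    have b: "b > 0" using ab quotient_of_denom_pos by blast
    have qx: "q x = of_int a / of_int b" using ab quotient_of_div by blast
    show ?case
      by (intro exI[of _ "\<lambda>y. if y = x then d * a else m y * b"] exI[of _ "d * b"])
        (use md b qx in \<open>auto simp: field_simps\<close>)
  qed
  then show ?thesis using that by blast
qed

lemma int_relation_from_real_relation:
  fixes s :: "(nat \<Rightarrow> 'a) \<Rightarrow> real"
  assumes "finite L" and "vanishes n X L s" and "x1 \<in> L" and "s x1 \<noteq> 0"
  obtains m :: "(nat \<Rightarrow> 'a) \<Rightarrow> int"
  where "vanishes n X L m" and "m x1 \<noteq> 0" and "\<forall>x\<in>L. s x = 0 \<longrightarrow> m x = 0"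
proof -
  obtain \<phi> :: "real \<Rightarrow> rat" where \<phi>: "Modules.additive \<phi>" "\<phi> (s x1) = 1"
    by (rule exists_additive_real_to_rat[OF assms(4)])
  obtain m d where md: "(d::int) > 0" "\<forall>x\<in>L. of_int (m x) = of_int d * \<phi> (s x)"
    by (rule rat_fun_common_denominator[OF assms(1), of "\<lambda>x. \<phi> (s x)"])
  have "vanishes n X L (\<lambda>x. \<phi> (s x))"
    by (rule vanishes_additive[OF \<phi>(1) assms(2)])
  then have "vanishes n X L (\<lambda>x. of_int d * \<phi> (s x))"
    by (rule vanishes_additive[of "\<lambda>y. of_int d * y", rotated])
      (simp add: Modules.additive_def distrib_left)
  then have "vanishes n X L (\<lambda>x. rat_of_int (m x))"
    using md(2) by (simp add: vanishes_def)
  then have "vanishes n X L m"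
    by (simp add: vanishes_def flip: of_int_sum)
  moreover have "m x1 \<noteq> 0"
    using md \<phi>(2) assms(3) by force
  moreover have "\<forall>x\<in>L. s x = 0 \<longrightarrow> m x = 0"
    using md Modules.additive.zero[OF \<phi>(1)] by force
  ultimately show ?thesis using that by blast
qed

lemma loop_real_relation_zero_at_point:
  fixes s :: "(nat \<Rightarrow> 'a) \<Rightarrow> real"
  assumes loop: "is_loop n X L" and "vanishes n X L s" and "x0 \<in> L" and "s x0 = 0"
    and "x \<in> L"
  shows "s x = 0"
proof (rule ccontr)
  assume nonzero: "s x \<noteq> 0"
  have fin: "finite L"
    using loop by (simp add: is_loop_def)
  obtain m :: "(nat \<Rightarrow> 'a) \<Rightarrow> int"
    where m: "vanishes n X L m" "m x \<noteq> 0" "\<forall>y\<in>L. s y = 0 \<longrightarrow> m y = 0"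
    by (rule int_relation_from_real_relation[where s = s, OF fin assms(2,5) nonzero])
  define S where "S = {y\<in>L. m y \<noteq> 0}"
  have "S \<subset> L" and "S \<noteq> {}"
    using assms(3-5) m(2,3) by (auto simp: S_def)
  moreover have "has_int_relation n X S"
    using vanishes_on_support[OF fin m(1)] by (auto simp: has_int_relation_def S_def)
  ultimately show False
    using loop by (auto simp: is_loop_def)
qed

theorem lemma3:
  fixes n :: nat and X :: "nat \<Rightarrow> 'a set" and L :: "(nat \<Rightarrow> 'a) set"
    and N :: "(nat \<Rightarrow> 'a) \<Rightarrow> int" and r :: "(nat \<Rightarrow> 'a) \<Rightarrow> real"
  assumes "\<forall>i<n. X i \<noteq> {}"
    and "is_loop n X L"
    and "Gcd (N ` L) = 1"
    and "vanishes n X L N"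
    and "vanishes n X L r"
  shows "\<exists>\<alpha>::real. \<forall>x\<in>L. r x = \<alpha> * of_int (N x)"
proof -
  obtain x0 where x0: "x0 \<in> L" "N x0 \<noteq> 0"
    using assms(3) Gcd_0_iff[of "N ` L"] by auto
  define \<alpha> where "\<alpha> = r x0 / of_int (N x0)"
  define s where "s x = r x - \<alpha> * of_int (N x)" for x
  have "vanishes n X L (\<lambda>x. \<alpha> * of_int (N x))"
    by (rule vanishes_additive[of "\<lambda>k. \<alpha> * of_int k", OF _ assms(4)])
      (simp add: Modules.additive_def distrib_left)
  then have "vanishes n X L s"
    unfolding s_def by (rule vanishes_diff[OF assms(5)])
  moreover have "s x0 = 0"
    using x0 by (simp add: s_def \<alpha>_def)
  ultimately have "\<forall>x\<in>L. s x = 0"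
    using loop_real_relation_zero_at_point[OF assms(2) _ x0(1)] by blast
  then show ?thesis
    by (intro exI[of _ \<alpha>]) (simp add: s_def)
qed

end
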